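(* Let $\Phi:\mathbb{R}\to\mathbb{R}$, $\Phi(x)=W^{(2)}\mathrm{ReLU}\big(W^{(1)}\mathrm{ReLU}(W^{(0)}x+b^{(0)})+b^{(1)}\big)+b^{(2)}$, where $W^{(0)},W^{(1)}\sim\mathcal{N}(0,2)$, $W^{(2)}\sim\mathcal{N}(0,1)$, $b^{(\ell)}\sim\mathcal{D}^{(\ell)}$ for arbitrary probability distributions $\mathcal{D}^{(\ell)}$ on $\mathbb{R}$ ($\ell=0,1,2$), all jointly independent real random variables. Assume $\mathbb{P}(b^{(1)}\le 0)>0$. Let $\widetilde{\Phi}(x)=W^{(2)}(W^{(1)}(W^{(0)}x+b^{(0)})+b^{(1)})+b^{(2)}$. Then with positive probability $\mathrm{Lip}(\Phi)=0<\mathrm{Lip}(\widetilde{\Phi})$.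
   Context: $\mathrm{ReLU}(t)=\max\{0,t\}$; $\mathrm{Lip}(f)=\sup_{x\neq y}|f(x)-f(y)|/|x-y|$. This is a ReLU network of width $N=1$ with $L=2$ hidden layers, with the variance $2/N=2$ for the first two weight layers. *)

theory Defs
  imports "HOL-Probability.Probability"
begin

definition lip :: "(real \<Rightarrow> real) \<Rightarrow> ereal" where
  "lip f = (SUP p \<in> {p :: real \<times> real. fst p \<noteq> snd p}.
              ereal (\<bar>f (fst p) - f (snd p)\<bar> / \<bar>fst p - snd p\<bar>))"

definition relu :: "real \<Rightarrow> real" where
  "relu t = max 0 t"

end

theory Submission imports Defs begin

text \<open>Consider the event \<open>W0 > 0, W1 < 0, W2 > 0, b1 \<le> 0\<close>. By independence its probability is a
  product of four positive probabilities, the Gaussian weights having an everywhere positive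
  density. On this event the second pre-activation \<open>W1 * relu (\<dots>) + b1\<close> is never positive, so the
  ReLU network is the constant \<open>b2\<close>, whereas the linear network is affine with nonzero slope
  \<open>W2 * W1 * W0\<close>.\<close>

lemma lip_affine: "lip (\<lambda>x. c * x + d) = ereal \<bar>c\<bar>"
proof -
  have slope: "\<bar>(c * x + d) - (c * y + d)\<bar> / \<bar>x - y\<bar> = \<bar>c\<bar>" if "x \<noteq> y" for x y :: real
    using that by (simp add: abs_mult flip: right_diff_distrib)
  have "{p :: real \<times> real. fst p \<noteq> snd p} \<noteq> {}"
    by (auto intro: exI[of _ "(0, 1)"])
  moreover have "lip (\<lambda>x. c * x + d) = (SUP p \<in> {p :: real \<times> real. fst p \<noteq> snd p}. ereal \<bar>c\<bar>)"
    unfolding lip_def using slope by (intro SUP_cong) auto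
  ultimately show ?thesis
    by (simp add: SUP_const)
qed

lemma lip_const: "lip (\<lambda>x. d) = 0"
  using lip_affine[of 0 d] by (simp add: zero_ereal_def)

lemma relu_eq_0_iff: "relu t = 0 \<longleftrightarrow> t \<le> 0"
  by (simp add: relu_def max_def)

lemma relu_nonneg: "0 \<le> relu t"
  by (simp add: relu_def)

lemma lip_relu_net_eq_0:
  assumes "w1 \<le> 0" and "b1 \<le> 0"
  shows "lip (\<lambda>x. w2 * relu (w1 * relu (w0 * x + b0) + b1) + b2) = 0"
proof -
  have "relu (w1 * relu t + b1) = 0" for t
    using assms mult_nonpos_nonneg[OF _ relu_nonneg] by (simp add: relu_eq_0_iff add_nonpos_nonpos)
  then show ?thesis
    by (simp add: lip_const)
qed

lemma lip_linear_net: "lip (\<lambda>x. w2 * (w1 * (w0 * x + b0) + b1) + b2) = ereal \<bar>w2 * w1 * w0\<bar>"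
proof -
  have "(\<lambda>x. w2 * (w1 * (w0 * x + b0) + b1) + b2) = (\<lambda>x. (w2 * w1 * w0) * x + (w2 * (w1 * b0 + b1) + b2))"
    by (simp add: algebra_simps)
  then show ?thesis
    by (simp add: lip_affine)
qed

lemma emeasure_lborel_pos_if_interval_subset:
  fixes S :: "real set"
  assumes "a < b" and "{a<..<b} \<subseteq> S" and "S \<in> sets borel"
  shows "0 < emeasure lborel S"
proof -
  have "0 < emeasure lborel {a<..<b}"
    using \<open>a < b\<close> by simp
  also have "\<dots> \<le> emeasure lborel S"
    using assms by (intro emeasure_mono) auto
  finally show ?thesis .
qed

lemma (in prob_space) prob_pos_if_density_pos:
  assumes X: "distributed M N X f" and f_pos: "AE x in N. 0 < f x"
    and S: "S \<in> sets N" "0 < emeasure N S"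
  shows "0 < prob (X -` S \<inter> space M)"
proof (rule ccontr)
  have f: "f \<in> borel_measurable N"
    using X by (simp add: distributed_def)
  assume "\<not> 0 < prob (X -` S \<inter> space M)"
  then have "emeasure M (X -` S \<inter> space M) = 0"
    by (simp add: emeasure_eq_measure less_le)
  then have "S \<in> null_sets (density N f)"
    using X S(1) by (simp add: null_sets_def distributed_distr_eq_density[symmetric] emeasure_distr)
  then have "AE x in N. x \<in> S \<longrightarrow> f x = 0"
    by (simp add: null_sets_density_iff[OF f])
  with f_pos have "AE x in N. x \<notin> S"
    by eventually_elim auto
  then have "S \<in> null_sets N"
    using S(1) by (simp add: AE_iff_null_sets)
  with S(2) show False
    by (auto dest: null_setsD1)
qed

lemma (in prob_space) prob_normal_pos:
  assumes "distributed M lborel X (normal_density \<mu> \<sigma>)" and "0 < \<sigma>"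
    and "a < b" and "{a<..<b} \<subseteq> S" and "S \<in> sets borel"
  shows "0 < prob (X -` S \<inter> space M)"
proof (rule prob_pos_if_density_pos[where N = lborel])
  show "AE x in lborel. 0 < ennreal (normal_density \<mu> \<sigma> x)"
    using normal_density_pos[OF \<open>0 < \<sigma>\<close>] by simp
  show "0 < emeasure lborel S"
    using assms(3-5) by (rule emeasure_lborel_pos_if_interval_subset)
qed (use assms in auto)

lemma (in prob_space) prob_indep_Inter_pos:
  assumes "indep_vars N X I" and "J \<noteq> {}" "finite J" "J \<subseteq> I"
    and "\<And>i. i \<in> J \<Longrightarrow> A i \<in> sets (N i)"
    and "\<And>i. i \<in> J \<Longrightarrow> 0 < prob (X i -` A i \<inter> space M)"
  shows "0 < prob (\<Inter>i\<in>J. X i -` A i \<inter> space M)"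
proof -
  have "0 < (\<Prod>i\<in>J. prob (X i -` A i \<inter> space M))"
    using assms(6) by (simp add: prod_pos)
  then show ?thesis
    by (subst indep_varsD[OF assms(1-5)])
qed

theorem proposition4p9:
  fixes M :: "'a measure" and W0 W1 W2 b0 b1 b2 :: "'a \<Rightarrow> real"
  assumes "prob_space M"
    and "prob_space.indep_vars M (\<lambda>_. borel) (\<lambda>i. [W0, W1, W2, b0, b1, b2] ! i) {..<6}"
    and "distributed M lborel W0 (normal_density 0 (sqrt 2))"
    and "distributed M lborel W1 (normal_density 0 (sqrt 2))"
    and "distributed M lborel W2 (normal_density 0 1)"
    and "measure M {\<omega> \<in> space M. b1 \<omega> \<le> 0} > 0"
  shows "\<exists>A \<in> sets M. measure M A > 0 \<and>
           (\<forall>\<omega> \<in> A.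
              lip (\<lambda>x. W2 \<omega> * relu (W1 \<omega> * relu (W0 \<omega> * x + b0 \<omega>) + b1 \<omega>) + b2 \<omega>) = 0 \<and>
              0 < lip (\<lambda>x. W2 \<omega> * (W1 \<omega> * (W0 \<omega> * x + b0 \<omega>) + b1 \<omega>) + b2 \<omega>))"
proof -
  interpret prob_space M by (rule assms(1))
  define X where "X i = [W0, W1, W2, b0, b1, b2] ! i" for i
  define S :: "nat \<Rightarrow> real set" where
    "S i = (if i = 1 then {..<0} else if i = 4 then {..0} else {0<..})" for i
  define E where "E = (\<Inter>i\<in>{0, 1, 2, 4}. X i -` S i \<inter> space M)"
  have E_eq: "E = {\<omega> \<in> space M. 0 < W0 \<omega> \<and> W1 \<omega> < 0 \<and> 0 < W2 \<omega> \<and> b1 \<omega> \<le> 0}"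
    by (auto simp: E_def X_def S_def)
  have "0 < prob (X i -` S i \<inter> space M)" if "i \<in> {0, 1, 2, 4}" for i
  proof -
    have "0 < prob (W0 -` {0<..} \<inter> space M)" "0 < prob (W1 -` {..<0} \<inter> space M)"
      "0 < prob (W2 -` {0<..} \<inter> space M)"
      using prob_normal_pos[OF assms(3), of 0 1 "{0<..}"] prob_normal_pos[OF assms(4), of "-1" 0 "{..<0}"]
        prob_normal_pos[OF assms(5), of 0 1 "{0<..}"] by (simp_all add: subset_eq)
    moreover have "b1 -` {..0} \<inter> space M = {\<omega> \<in> space M. b1 \<omega> \<le> 0}"
      by auto
    ultimately show ?thesis
      using that assms(6) by (auto simp: X_def S_def)
  qed
  then have E_pos: "0 < prob E"
    unfolding E_def using assms(2)
    by (intro prob_indep_Inter_pos[where N = "\<lambda>_. borel" and I = "{..<6}"]) (auto simp: X_def S_def)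
  \<comment> \<open>\<^const>\<open>measure\<close> vanishes on non-measurable sets\<close>
  then have "E \<in> sets M"
    using measure_notin_sets by fastforce
  moreover have "lip (\<lambda>x. W2 \<omega> * relu (W1 \<omega> * relu (W0 \<omega> * x + b0 \<omega>) + b1 \<omega>) + b2 \<omega>) = 0 \<and>
      0 < lip (\<lambda>x. W2 \<omega> * (W1 \<omega> * (W0 \<omega> * x + b0 \<omega>) + b1 \<omega>) + b2 \<omega>)" if "\<omega> \<in> E" for \<omega>
    using that by (auto simp: E_eq lip_relu_net_eq_0 lip_linear_net)
  ultimately show ?thesis
    using E_pos by blast
qed

end
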